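(* There exists an $S(3,K_4^{(3)}+e,v)$ for each $v\in\{10,12,15\}$.
   Context: $K_4^{(3)}+e$ denotes the 3-uniform hypergraph with vertex set $\{1,2,3,4,5\}$ and edge set $\{\{1,2,3\},\{1,2,4\},\{1,3,4\},\{2,3,4\},\{3,4,5\}\}$. An $S(3,K_4^{(3)}+e,v)$ is a collection of 3-uniform hypergraphs (blocks) on subsets of a $v$-set $X$, each isomorphic to $K_4^{(3)}+e$, whose edge sets partition the set of all 3-subsets of $X$. *)

theory Defs
  imports Main
begin

definition K4e_edges :: "nat set set" where
  "K4e_edges = {{1,2,3},{1,2,4},{1,3,4},{2,3,4},{3,4,5}}"

definition is_K4e_block :: "'a set \<Rightarrow> ('a set \<times> 'a set set) \<Rightarrow> bool" where
  "is_K4e_block X B \<longleftrightarrow> fst B \<subseteq> X \<and>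
     (\<exists>f. bij_betw f {1..5::nat} (fst B) \<and> snd B = (\<lambda>e. f ` e) ` K4e_edges)"

text \<open>An S(3, K_4^(3)+e, v) on the finite set X: a collection of blocks whose edge
  sets partition the set of all 3-subsets of X (every 3-subset of X is an edge of
  exactly one block; block edges are automatically 3-subsets of X).\<close>
definition is_S3_K4e :: "'a set \<Rightarrow> ('a set \<times> 'a set set) set \<Rightarrow> bool" where
  "is_S3_K4e X \<B> \<longleftrightarrow> finite X \<and> (\<forall>B\<in>\<B>. is_K4e_block X B) \<and>
     (\<forall>T. T \<subseteq> X \<and> card T = 3 \<longrightarrow> (\<exists>!B. B \<in> \<B> \<and> T \<in> snd B))"

end

theory Submission
  imports Defs
begin

text \<open>The designs are exhibited explicitly and verified by computation. Those for \<open>v = 12\<close> and \<open>v = 15\<close> are developed from a few base blocks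
  under \<open>\<int>/11\<close> (fixing one point) and \<open>\<int>/13\<close> (fixing two points). The developed block list
  is invariant under the rotation, so the number of blocks through a triple is constant on its
  orbit; as every orbit contains a triple through 0, only those triples need to be checked.\<close>

type_synonym 'a quintuple = "'a \<times> 'a \<times> 'a \<times> 'a \<times> 'a"

definition K4e_block :: "'a quintuple \<Rightarrow> 'a set \<times> 'a set set" where
  "K4e_block = (\<lambda>(a, b, c, d, e).
     ({a, b, c, d, e}, {{a, b, c}, {a, b, d}, {a, c, d}, {b, c, d}, {c, d, e}}))"

lemma is_K4e_block_K4e_block:
  assumes "distinct [a, b, c, d, e]" and "{a, b, c, d, e} \<subseteq> X"
  shows "is_K4e_block X (K4e_block (a, b, c, d, e))"
proof -
  define f where "f i = [a, b, c, d, e] ! (i - 1)" for i :: nat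
  have five: "{1..5::nat} = {1, 2, 3, 4, 5}" by auto
  have "bij_betw f {1..5} {a, b, c, d, e}"
    using assms(1) unfolding bij_betw_def five by (simp add: f_def)
  moreover have "{{a, b, c}, {a, b, d}, {a, c, d}, {b, c, d}, {c, d, e}} = (\<lambda>E. f ` E) ` K4e_edges"
    by (simp add: K4e_edges_def f_def)
  ultimately show ?thesis
    using assms(2) unfolding is_K4e_block_def K4e_block_def by auto
qed

definition blocks_through :: "'a set \<Rightarrow> 'a quintuple list \<Rightarrow> nat" where
  "blocks_through T bs = length (filter (\<lambda>t. T \<in> snd (K4e_block t)) bs)"

lemma is_S3_K4e_if_blocks_through_eq_1:
  assumes "finite X"
    and blocks: "\<And>a b c d e. (a, b, c, d, e) \<in> set bs \<Longrightarrow>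
      distinct [a, b, c, d, e] \<and> {a, b, c, d, e} \<subseteq> X"
    and once: "\<And>T. T \<subseteq> X \<Longrightarrow> card T = 3 \<Longrightarrow> blocks_through T bs = 1"
  shows "is_S3_K4e X (K4e_block ` set bs)"
  unfolding is_S3_K4e_def
proof (intro conjI ballI allI impI)
  show "finite X" by fact
next
  fix B assume "B \<in> K4e_block ` set bs"
  then show "is_K4e_block X B"
    using blocks is_K4e_block_K4e_block by fastforce
next
  fix T assume "T \<subseteq> X \<and> card T = 3"
  then have "length (filter (\<lambda>t. T \<in> snd (K4e_block t)) bs) = 1"
    using once unfolding blocks_through_def by blast
  then obtain t where "filter (\<lambda>t. T \<in> snd (K4e_block t)) bs = [t]"
    by (auto simp: length_Suc_conv)
  then have unique: "{t \<in> set bs. T \<in> snd (K4e_block t)} = {t}"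
    by (metis set_filter list.set(1,2))
  show "\<exists>!B. B \<in> K4e_block ` set bs \<and> T \<in> snd B"
  proof (rule ex1I[of _ "K4e_block t"])
    show "K4e_block t \<in> K4e_block ` set bs \<and> T \<in> snd (K4e_block t)"
      using unique by auto
  next
    fix B assume "B \<in> K4e_block ` set bs \<and> T \<in> snd B"
    then obtain t' where "t' \<in> {t \<in> set bs. T \<in> snd (K4e_block t)}" "B = K4e_block t'"
      by blast
    then show "B = K4e_block t"
      unfolding unique by simp
  qed
qed

lemma card_3_sorted:
  fixes T :: "'a::linorder set"
  assumes "card T = 3"
  obtains a b c where "a < b" "b < c" "T = {a, b, c}"
proof -
  have "length (sorted_list_of_set T) = 3"
    using assms by simp
  then obtain a b c where abc: "sorted_list_of_set T = [a, b, c]"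
    by (auto simp only: numeral_3_eq_3 length_Suc_conv length_0_conv)
  moreover have "finite T"
    using assms by (metis card.infinite zero_neq_numeral)
  ultimately show thesis
    using sorted_list_of_set.strict_sorted_key_list_of_set[of T] set_sorted_list_of_set[of T]
    by (intro that) auto
qed

lemma sort_eq_sorted_triple_iff:
  fixes a b c :: "'a::linorder"
  assumes "length xs = 3" "a < b" "b < c"
  shows "sort xs = [a, b, c] \<longleftrightarrow> set xs = {a, b, c}"
proof
  assume "sort xs = [a, b, c]"
  then show "set xs = {a, b, c}"
    by (metis set_sort list.set(1,2))
next
  assume set_xs: "set xs = {a, b, c}"
  then have "card (set xs) = length xs"
    using assms by (auto simp: card_insert_if)
  then have "distinct (sort xs)"
    by (simp add: card_distinct)
  then show "sort xs = [a, b, c]"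
    using assms(2,3) set_xs by (intro sorted_distinct_set_unique) auto
qed

definition K4e_triples :: "'a quintuple \<Rightarrow> 'a list list" where
  "K4e_triples = (\<lambda>(a, b, c, d, e). [[a, b, c], [a, b, d], [a, c, d], [b, c, d], [c, d, e]])"

definition blocks_through_sorted :: "'a::linorder list \<Rightarrow> 'a quintuple list \<Rightarrow> nat" where
  "blocks_through_sorted xs bs = length (filter (\<lambda>t. xs \<in> set (map sort (K4e_triples t))) bs)"

lemma sorted_triple_mem_sort_image_iff:
  fixes a b c :: "'a::linorder"
  assumes "\<forall>xs \<in> S. length xs = 3" "a < b" "b < c"
  shows "[a, b, c] \<in> sort ` S \<longleftrightarrow> {a, b, c} \<in> set ` S"
proof -
  have "[a, b, c] \<in> sort ` S \<longleftrightarrow> (\<exists>xs \<in> S. sort xs = [a, b, c])"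
    by (auto simp: image_iff eq_commute)
  also have "\<dots> \<longleftrightarrow> (\<exists>xs \<in> S. set xs = {a, b, c})"
    using assms sort_eq_sorted_triple_iff by (intro bex_cong) blast+
  also have "\<dots> \<longleftrightarrow> {a, b, c} \<in> set ` S"
    by (auto simp: image_iff eq_commute)
  finally show ?thesis .
qed

lemma blocks_through_eq_sorted:
  fixes a b c :: "'a::linorder"
  assumes "a < b" "b < c"
  shows "blocks_through {a, b, c} bs = blocks_through_sorted [a, b, c] bs"
proof -
  have "{a, b, c} \<in> snd (K4e_block t) \<longleftrightarrow> [a, b, c] \<in> sort ` set (K4e_triples t)" for t
  proof -
    have "snd (K4e_block t) = set ` set (K4e_triples t)"
      by (cases t) (simp add: K4e_block_def K4e_triples_def)
    moreover have "\<forall>xs \<in> set (K4e_triples t). length xs = 3"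
      by (cases t) (simp add: K4e_triples_def)
    ultimately show ?thesis
      using sorted_triple_mem_sort_image_iff assms by metis
  qed
  then show ?thesis
    unfolding blocks_through_def blocks_through_sorted_def by simp
qed

definition valid_K4e_blocks :: "nat \<Rightarrow> nat quintuple list \<Rightarrow> bool" where
  "valid_K4e_blocks v bs \<longleftrightarrow>
     list_all (\<lambda>(a, b, c, d, e). distinct [a, b, c, d, e] \<and> list_all (\<lambda>x. x < v) [a, b, c, d, e]) bs"

lemma is_S3_K4e_of_sorted_triples:
  assumes "valid_K4e_blocks v bs"
    and "\<And>a b c. a < b \<Longrightarrow> b < c \<Longrightarrow> c < v \<Longrightarrow> blocks_through_sorted [a, b, c] bs = 1"
  shows "is_S3_K4e {0..<v} (K4e_block ` set bs)"
proof (rule is_S3_K4e_if_blocks_through_eq_1)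
  show "distinct [a, b, c, d, e] \<and> {a, b, c, d, e} \<subseteq> {0..<v}" if "(a, b, c, d, e) \<in> set bs"
    for a b c d e
    using assms(1) that by (auto simp: valid_K4e_blocks_def list_all_iff)
next
  fix T :: "nat set"
  assume "T \<subseteq> {0..<v}" "card T = 3"
  then obtain a b c where "a < b" "b < c" "c < v" "T = {a, b, c}"
    by (elim card_3_sorted) auto
  then show "blocks_through T bs = 1"
    using blocks_through_eq_sorted[of a b c bs] assms(2)[of a b c] by simp
qed simp

definition S3_K4e_certificate :: "nat \<Rightarrow> nat quintuple list \<Rightarrow> bool" where
  "S3_K4e_certificate v bs \<longleftrightarrow> valid_K4e_blocks v bs \<and>
     list_all (\<lambda>c. list_all (\<lambda>b. list_all (\<lambda>a.
       blocks_through_sorted [a, b, c] bs = 1) [0..<b]) [0..<c]) [0..<v]"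

lemma is_S3_K4e_if_certificate:
  assumes "S3_K4e_certificate v bs"
  shows "is_S3_K4e {0..<v} (K4e_block ` set bs)"
proof (rule is_S3_K4e_of_sorted_triples)
  show "valid_K4e_blocks v bs"
    using assms unfolding S3_K4e_certificate_def by simp
  have "\<forall>c \<in> set [0..<v]. \<forall>b \<in> set [0..<c]. \<forall>a \<in> set [0..<b].
      blocks_through_sorted [a, b, c] bs = 1"
    using assms unfolding S3_K4e_certificate_def list_all_iff by (rule conjunct2)
  then show "blocks_through_sorted [a, b, c] bs = 1" if "a < b" "b < c" "c < v" for a b c
    using that by simp
qed

definition cyclic_shift :: "nat \<Rightarrow> nat \<Rightarrow> nat \<Rightarrow> nat" where
  "cyclic_shift m k x = (if x < m then (x + k) mod m else x)"

lemma cyclic_shift_cyclic_shift: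
  "cyclic_shift m k (cyclic_shift m l x) = cyclic_shift m (k + l) x"
  by (auto simp: cyclic_shift_def mod_add_right_eq ac_simps)

lemma cyclic_shift_mult_self: "cyclic_shift m (m * k) x = x"
  by (simp add: cyclic_shift_def)

lemma cyclic_shift_0: "cyclic_shift m 0 = id"
  using cyclic_shift_mult_self[of m 0] by auto

lemma cyclic_shift_self: "cyclic_shift m m = id"
  using cyclic_shift_mult_self[of m 1] by auto

lemma inj_cyclic_shift: "inj (cyclic_shift m k)"
proof (rule inj_on_inverseI)
  show "cyclic_shift m (m * k - k) (cyclic_shift m k x) = x" for x
  proof (cases "m = 0")
    case False
    then show ?thesis
      by (simp add: cyclic_shift_cyclic_shift cyclic_shift_mult_self)
  qed (simp add: cyclic_shift_def)
qed

lemma cyclic_shift_to_0: "x < m \<Longrightarrow> cyclic_shift m (m - x) x = 0"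
  by (simp add: cyclic_shift_def)

lemma cyclic_shift_less: "x < v \<Longrightarrow> m \<le> v \<Longrightarrow> cyclic_shift m k x < v"
  by (auto simp: cyclic_shift_def intro: order.strict_trans2[OF mod_less_divisor])

definition map_quintuple :: "('a \<Rightarrow> 'b) \<Rightarrow> 'a quintuple \<Rightarrow> 'b quintuple" where
  "map_quintuple f = (\<lambda>(a, b, c, d, e). (f a, f b, f c, f d, f e))"

lemma map_quintuple_comp: "map_quintuple f (map_quintuple g t) = map_quintuple (f \<circ> g) t"
  by (cases t) (simp add: map_quintuple_def)

lemma blocks_through_map_quintuple:
  assumes "inj f"
  shows "blocks_through (f ` T) (map (map_quintuple f) bs) = blocks_through T bs"
proof -
  have "inj ((`) f)"
    using assms by (simp add: inj_def inj_image_eq_iff)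
  moreover have "snd (K4e_block (map_quintuple f t)) = (`) f ` snd (K4e_block t)" for t
    by (cases t) (simp add: K4e_block_def map_quintuple_def)
  ultimately show ?thesis
    by (simp add: blocks_through_def inj_image_mem_iff comp_def)
qed

lemma blocks_through_concat:
  "blocks_through T (concat bss) = (\<Sum>bs \<leftarrow> bss. blocks_through T bs)"
  by (induction bss) (simp_all add: blocks_through_def)

definition develop :: "nat \<Rightarrow> nat quintuple list \<Rightarrow> nat quintuple list" where
  "develop m bases = concat (map (\<lambda>k. map (map_quintuple (cyclic_shift m k)) bases) [0..<m])"

lemma blocks_through_develop:
  "blocks_through T (develop m bases)
     = (\<Sum>k<m. blocks_through T (map (map_quintuple (cyclic_shift m k)) bases))"
  by (simp add: develop_def blocks_through_concat interv_sum_list_conv_sum_set_nat atLeast0LessThan)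

lemma blocks_through_develop_shift1:
  "blocks_through (cyclic_shift m 1 ` T) (develop m bases) = blocks_through T (develop m bases)"
proof (cases m)
  case (Suc n)
  define f where
    "f k = blocks_through (cyclic_shift m 1 ` T) (map (map_quintuple (cyclic_shift m k)) bases)" for k
  define g where "g k = blocks_through T (map (map_quintuple (cyclic_shift m k)) bases)" for k
  have f_Suc: "f (Suc k) = g k" for k
  proof -
    have "map (map_quintuple (cyclic_shift m (Suc k))) bases
        = map (map_quintuple (cyclic_shift m 1)) (map (map_quintuple (cyclic_shift m k)) bases)"
      by (simp add: map_quintuple_comp comp_def cyclic_shift_cyclic_shift)
    then show ?thesis
      unfolding f_def g_def by (simp only: blocks_through_map_quintuple[OF inj_cyclic_shift])
  qed
  have "f 0 = f (Suc n)"
    using Suc by (simp add: f_def cyclic_shift_0 cyclic_shift_self flip: Suc)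
  have "(\<Sum>k<m. f k) = f 0 + (\<Sum>k<n. f (Suc k))"
    unfolding Suc by (rule sum.lessThan_Suc_shift)
  also have "\<dots> = g n + (\<Sum>k<n. g k)"
    using \<open>f 0 = f (Suc n)\<close> by (simp add: f_Suc)
  also have "\<dots> = (\<Sum>k<m. g k)"
    using Suc by simp
  finally have "(\<Sum>k<m. f k) = (\<Sum>k<m. g k)" .
  then show ?thesis
    by (simp add: blocks_through_develop f_def g_def)
qed (simp add: develop_def blocks_through_def)

lemma blocks_through_develop_shift:
  "blocks_through (cyclic_shift m k ` T) (develop m bases) = blocks_through T (develop m bases)"
proof (induction k arbitrary: T)
  case 0
  then show ?case by (simp add: cyclic_shift_0)
next
  case (Suc k)
  have "cyclic_shift m (Suc k) ` T = cyclic_shift m 1 ` cyclic_shift m k ` T"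
    by (simp add: image_image cyclic_shift_cyclic_shift)
  then show ?case
    by (simp only: blocks_through_develop_shift1 Suc.IH)
qed

lemma is_S3_K4e_develop:
  assumes "m \<le> v" "v \<le> m + 2" and valid: "valid_K4e_blocks v (develop m bases)"
    and through_0:
      "\<And>b c. 0 < b \<Longrightarrow> b < c \<Longrightarrow> c < v \<Longrightarrow> blocks_through_sorted [0, b, c] (develop m bases) = 1"
  shows "is_S3_K4e {0..<v} (K4e_block ` set (develop m bases))"
proof (rule is_S3_K4e_of_sorted_triples[OF valid])
  fix a b c :: nat
  assume abc: "a < b" "b < c" "c < v"
  define s where "s = cyclic_shift m (m - a)"
  have "card (s ` {a, b, c}) = card {a, b, c}"
    unfolding s_def by (rule card_image[OF inj_on_subset[OF inj_cyclic_shift subset_UNIV]])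
  also have "\<dots> = 3"
    using abc by (auto simp: card_insert_if)
  finally have "card (s ` {a, b, c}) = 3" .
  then obtain a' b' c' where abc': "a' < b'" "b' < c'" "s ` {a, b, c} = {a', b', c'}"
    by (rule card_3_sorted)
  \<comment> \<open>At most two points are fixed, so the least point \<open>a\<close> of the triple is shifted to 0.\<close>
  have "0 \<in> s ` {a, b, c}"
    using abc assms(2) cyclic_shift_to_0[of a m] by (auto simp: s_def)
  moreover have "s ` {a, b, c} \<subseteq> {0..<v}"
    using abc assms(1) cyclic_shift_less by (auto simp: s_def)
  ultimately have "0 \<in> {a', b', c'}" "{a', b', c'} \<subseteq> {0..<v}"
    unfolding abc'(3) by auto
  then have "a' = 0" "0 < b'" "c' < v"
    using abc'(1,2) by auto
  have "blocks_through_sorted [a, b, c] (develop m bases)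
      = blocks_through (s ` {a, b, c}) (develop m bases)"
    unfolding s_def blocks_through_develop_shift using abc by (simp add: blocks_through_eq_sorted)
  also have "\<dots> = blocks_through_sorted [0, b', c'] (develop m bases)"
    using abc' \<open>a' = 0\<close> by (simp add: blocks_through_eq_sorted)
  finally show "blocks_through_sorted [a, b, c] (develop m bases) = 1"
    using through_0 \<open>0 < b'\<close> \<open>b' < c'\<close> \<open>c' < v\<close> by simp
qed

definition cyclic_S3_K4e_certificate :: "nat \<Rightarrow> nat \<Rightarrow> nat quintuple list \<Rightarrow> bool" where
  "cyclic_S3_K4e_certificate m v bases \<longleftrightarrow> m \<le> v \<and> v \<le> m + 2 \<and>
     valid_K4e_blocks v (develop m bases) \<and>
     list_all (\<lambda>c. list_all (\<lambda>b.
       blocks_through_sorted [0, b, c] (develop m bases) = 1) [1..<c]) [1..<v]"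

lemma is_S3_K4e_if_cyclic_certificate:
  assumes "cyclic_S3_K4e_certificate m v bases"
  shows "is_S3_K4e {0..<v} (K4e_block ` set (develop m bases))"
proof (rule is_S3_K4e_develop)
  have "\<forall>c \<in> set [1..<v]. \<forall>b \<in> set [1..<c]. blocks_through_sorted [0, b, c] (develop m bases) = 1"
    using assms unfolding cyclic_S3_K4e_certificate_def list_all_iff by blast
  then show "blocks_through_sorted [0, b, c] (develop m bases) = 1" if "0 < b" "b < c" "c < v" for b c
    using that by simp
qed (use assms in \<open>simp_all add: cyclic_S3_K4e_certificate_def\<close>)

definition K4e_blocks_10 :: "nat quintuple list" where
  "K4e_blocks_10 =
    [(3, 5, 0, 2, 1), (2, 4, 1, 3, 0), (3, 6, 2, 8, 9), (2, 7, 3, 9, 8), (4, 5, 0, 8, 2),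
     (5, 4, 1, 9, 3), (7, 8, 0, 3, 9), (6, 9, 1, 2, 8), (4, 6, 2, 5, 9), (5, 7, 3, 4, 8),
     (2, 4, 0, 9, 5), (3, 5, 1, 8, 4), (6, 9, 0, 8, 1), (7, 8, 1, 9, 0), (2, 7, 4, 8, 9),
     (3, 6, 5, 9, 8), (6, 7, 4, 9, 3), (7, 6, 5, 8, 2), (0, 3, 4, 6, 8), (1, 2, 5, 7, 9),
     (1, 4, 0, 7, 5), (0, 5, 1, 6, 4), (2, 6, 0, 7, 9), (3, 7, 1, 6, 8)]"

definition K4e_base_blocks_12 :: "nat quintuple list" where
  "K4e_base_blocks_12 = [(1, 11, 0, 5, 8), (0, 2, 1, 9, 11), (0, 7, 1, 3, 11), (1, 4, 0, 6, 8)]"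

definition K4e_base_blocks_15 :: "nat quintuple list" where
  "K4e_base_blocks_15 =
    [(3, 7, 0, 13, 14), (5, 7, 0, 1, 13), (0, 3, 1, 6, 13), (6, 10, 0, 2, 13),
     (0, 14, 2, 7, 10), (4, 14, 0, 1, 8), (2, 11, 0, 1, 9)]"

lemma S3_K4e_certificate_10: "S3_K4e_certificate 10 K4e_blocks_10"
  by code_simp

lemma cyclic_S3_K4e_certificate_12: "cyclic_S3_K4e_certificate 11 12 K4e_base_blocks_12"
  by code_simp

lemma cyclic_S3_K4e_certificate_15: "cyclic_S3_K4e_certificate 13 15 K4e_base_blocks_15"
  by code_simp

theorem lemma3p2:
  shows "\<forall>v \<in> {10, 12, 15::nat}. \<exists>(X::nat set) \<B>. finite X \<and> card X = v \<and> is_S3_K4e X \<B>"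
  using is_S3_K4e_if_certificate[OF S3_K4e_certificate_10]
    is_S3_K4e_if_cyclic_certificate[OF cyclic_S3_K4e_certificate_12]
    is_S3_K4e_if_cyclic_certificate[OF cyclic_S3_K4e_certificate_15]
  by (auto intro!: exI[of _ "{0..<_}"])

end
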